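(* Let $A \subset \mathbb{Z}$ be a finite set with $\min A = 0$, $\max A = b$, and $\gcd A = 1$. Let $\mathcal{C}_A = \{\sum_{a \in A} n_a (a,1) : n_a \in \mathbb{N}\} \subset \mathbb{Z}^2$, $\Lambda = \{(bn, m+n) : m,n \in \mathbb{Z}\}$, and $\Lambda^+ = \{(bn, m+n) : m,n \in \mathbb{N}\}$. For $a \in \{0,\ldots,b-1\}$ let $\mathcal{S}_a$ be the set of points of $\mathcal{C}_A$ congruent to $(a,1)$ modulo $\Lambda$, let $(g_a,h_a) \in \mathbb{N}^2$ be the unique point such that $\mathcal{S}_a \subseteq (g_a,h_a) + \Lambda^+$ and $E_a := ((g_a,h_a) + \Lambda^+) \setminus \mathcal{S}_a$ is finite. Then every $(n,h) \in E_a$ satisfies $h \leq 2b - 5$.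
   Context: $\mathbb{N} = \{0,1,2,\ldots\}$. The existence and uniqueness of $(g_a,h_a)$ as described is part of the setting (it is proved in the paper). *)

theory Defs
  imports Main
begin

definition coneA :: "int set \<Rightarrow> (int \<times> int) set" where
  "coneA A = {(\<Sum>a\<in>A. int (n a) * a, \<Sum>a\<in>A. int (n a)) | n :: int \<Rightarrow> nat. True}"

definition lat :: "int \<Rightarrow> (int \<times> int) set" where
  "lat b = {(b * n, m + n) | m n :: int. True}"

definition lat_pos :: "int \<Rightarrow> (int \<times> int) set" where
  "lat_pos b = {(b * int n, int m + int n) | m n :: nat. True}"

definition shifted_lat_pos :: "int \<Rightarrow> int \<times> int \<Rightarrow> (int \<times> int) set" where
  "shifted_lat_pos b p = {(fst p + x, snd p + y) | x y. (x, y) \<in> lat_pos b}"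

definition S_set :: "int set \<Rightarrow> int \<Rightarrow> int \<Rightarrow> (int \<times> int) set" where
  "S_set A b a = {p \<in> coneA A. (fst p - a, snd p - 1) \<in> lat b}"

end

theory Submission
  imports Defs "HOL-Library.Multiset"
begin

text \<open>
  A point of C_A is the sum and the size of a multiset over A \<subseteq> [0, b]. Among any b elements
  strictly between 0 and b there is, by pigeonhole on prefix sums, a nonempty submultiset Q with
  sum t b, and 0 < t < |Q|; replacing Q by t copies of b and |Q| - t zeros does not change the point.
  Hence every point of C_A has a representation with fewer than b inner elements, together with
  copies of b and of 0.

  Let (n, k) \<in> E_a. As E_a is finite, the rays (n, k + j) and (n + m b, k + m) meet C_A. In a reduced
  representation of (n + m b, k + m) fewer than m copies of b occur, since removing m of them would
  represent (n, k); this gives n + b \<le> (b - 1)^2. Then a reduced representation of n uses b at most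
  b - 3 times, so n is a sum of at most 2b - 4 elements of A, and padding with zeros puts (n, k)
  into C_A as soon as k \<ge> 2b - 4.
\<close>

lemma sum_mset_eq_sum_count:
  fixes M :: "'a::comm_semiring_1 multiset"
  assumes "finite A" "set_mset M \<subseteq> A"
  shows "sum_mset M = (\<Sum>a\<in>A. of_nat (count M a) * a)"
  using assms(2)
proof (induction M)
  case (add x M)
  then have "x \<in> A" by simp
  have "(\<Sum>a\<in>A - {x}. of_nat (count (add_mset x M) a) * a)
      = (\<Sum>a\<in>A - {x}. of_nat (count M a) * a)"
    by (rule sum.cong) auto
  with add \<open>x \<in> A\<close> assms(1) show ?case
    by (simp add: sum.remove[of A x] distrib_right add.assoc)
qed simp

lemma size_eq_sum_count:
  assumes "finite A" "set_mset M \<subseteq> A"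
  shows "size M = (\<Sum>a\<in>A. count M a)"
  using assms(2)
proof (induction M)
  case (add x M)
  then have "x \<in> A" by simp
  have "(\<Sum>a\<in>A - {x}. count (add_mset x M) a) = (\<Sum>a\<in>A - {x}. count M a)"
    by (rule sum.cong) auto
  with add \<open>x \<in> A\<close> assms(1) show ?case by (simp add: sum.remove[of A x])
qed simp

lemma mem_coneA_iff:
  assumes "finite A"
  shows "p \<in> coneA A \<longleftrightarrow> (\<exists>M. set_mset M \<subseteq> A \<and> p = (sum_mset M, int (size M)))"
proof
  assume "p \<in> coneA A"
  then obtain n where p: "p = (\<Sum>a\<in>A. int (n a) * a, \<Sum>a\<in>A. int (n a))"
    unfolding coneA_def by blast
  define M where "M = (\<Sum>a\<in>A. replicate_mset (n a) a)"
  have count_M: "count M a = n a" if "a \<in> A" for a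
    using assms that by (simp add: M_def count_sum)
  have "set_mset M \<subseteq> A"
    using assms by (auto simp: M_def set_mset_sum)
  moreover have "p = (sum_mset M, int (size M))"
    using assms calculation
    by (simp add: p sum_mset_eq_sum_count[of A M] size_eq_sum_count[of A M] count_M)
  ultimately show "\<exists>M. set_mset M \<subseteq> A \<and> p = (sum_mset M, int (size M))" by blast
next
  assume "\<exists>M. set_mset M \<subseteq> A \<and> p = (sum_mset M, int (size M))"
  then obtain M where "set_mset M \<subseteq> A" "p = (sum_mset M, int (size M))" by blast
  with assms show "p \<in> coneA A"
    unfolding coneA_def
    by (auto intro!: exI[of _ "count M"]
        simp: sum_mset_eq_sum_count[of A M] size_eq_sum_count[of A M])
qed

lemma ex_infix_sum_list_dvd:
  fixes xs :: "int list" and b :: int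
  assumes "0 < b" "nat b \<le> length xs"
  obtains ys zs ws where "xs = ys @ zs @ ws" "zs \<noteq> []" "b dvd sum_list zs"
proof -
  define r where "r i = sum_list (take i xs) mod b" for i
  have "r ` {0..nat b} \<subseteq> {0..<b}"
    using assms(1) by (auto simp: r_def)
  then have "card (r ` {0..nat b}) \<le> nat b"
    using card_mono[of "{0..<b}"] by fastforce
  then have "\<not> inj_on r {0..nat b}"
    by (intro pigeonhole) simp
  then obtain i j where ij: "i < j" "j \<le> nat b" "r i = r j"
    unfolding inj_on_def by (metis atLeastAtMost_iff linorder_neqE_nat)
  have split: "xs = take i xs @ drop i (take j xs) @ drop j xs"
    using \<open>i < j\<close> by (metis append.assoc append_take_drop_id less_imp_le min.absorb1 take_take)
  then have "sum_list (take j xs) = sum_list (take i xs) + sum_list (drop i (take j xs))"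
    by (metis append_take_drop_id sum_list_append take_take min.absorb1 \<open>i < j\<close> less_imp_le)
  with \<open>r i = r j\<close> have "b dvd sum_list (drop i (take j xs))"
    unfolding r_def by (metis add_diff_cancel_left' mod_eq_dvd_iff)
  moreover have "drop i (take j xs) \<noteq> []"
    using ij assms(2) by simp
  ultimately show thesis
    using split that by blast
qed

lemma ex_submset_sum_dvd:
  fixes P :: "int multiset" and b :: int
  assumes "0 < b" "nat b \<le> size P"
  obtains Q where "Q \<subseteq># P" "Q \<noteq> {#}" "b dvd sum_mset Q"
proof -
  obtain xs where P: "P = mset xs"
    by (metis ex_mset)
  with assms obtain ys zs ws where "xs = ys @ zs @ ws" "zs \<noteq> []" "b dvd sum_list zs"
    by (auto elim: ex_infix_sum_list_dvd)
  with P show thesis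
    by (intro that[of "mset zs"]) (auto simp: sum_mset_sum_list)
qed

lemma sum_mset_bounds:
  fixes Q :: "'a::linordered_idom multiset"
  assumes "set_mset Q \<subseteq> {l..u}"
  shows "of_nat (size Q) * l \<le> sum_mset Q" "sum_mset Q \<le> of_nat (size Q) * u"
  using assms by (induction Q) (auto simp: algebra_simps add_mono)

locale interval_generators =
  fixes A :: "int set" and b :: int
  assumes finite_A: "finite A"
    and A_subset: "A \<subseteq> {0..b}"
    and zero_in_A: "0 \<in> A"
    and b_in_A: "b \<in> A"
    and b_pos: "0 < b"
begin

abbreviation inner :: "int multiset \<Rightarrow> int multiset" where
  "inner M \<equiv> filter_mset (\<lambda>x. 0 < x \<and> x < b) M"

lemma exchange_inner_submset:
  assumes "set_mset M \<subseteq> A" "nat b \<le> size (inner M)"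
  obtains M' where "set_mset M' \<subseteq> A" "sum_mset M' = sum_mset M" "size M' = size M"
    "size (inner M') < size (inner M)"
proof -
  obtain Q where Q: "Q \<subseteq># inner M" "Q \<noteq> {#}" "b dvd sum_mset Q"
    using ex_submset_sum_dvd[OF b_pos assms(2)] by blast
  then obtain t where t: "sum_mset Q = b * t"
    by blast
  have Q_inner: "set_mset Q \<subseteq> {1..b - 1}"
    using mset_subset_eqD[OF Q(1)] by force
  have "0 < size Q"
    using Q(2) by (simp add: nonempty_has_size)
  moreover have "int (size Q) \<le> b * t" "b * t \<le> int (size Q) * (b - 1)"
    using sum_mset_bounds[OF Q_inner] t by simp_all
  ultimately have "0 < b * t" "b * t < b * int (size Q)"
    by (simp_all add: algebra_simps)
  then have "0 < t" "t < int (size Q)"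
    using b_pos by (simp_all add: zero_less_mult_iff)
  obtain C where C: "M = Q + C"
    using Q(1) by (metis mset_subset_eq_exists_conv multiset_filter_subset subset_mset.order_trans)
  define M' where "M' = C + replicate_mset (nat t) b + replicate_mset (size Q - nat t) 0"
  show thesis
  proof (rule that[of M'])
    show "set_mset M' \<subseteq> A"
      using assms(1) zero_in_A b_in_A by (auto simp: M'_def C)
    show "sum_mset M' = sum_mset M"
      using t \<open>0 < t\<close> by (simp add: M'_def C)
    show "size M' = size M"
      using \<open>t < int (size Q)\<close> by (simp add: M'_def C)
    have "inner Q = Q"
      using Q_inner by (auto simp: filter_mset_eq_conv)
    moreover have "inner (replicate_mset i b) = {#}" "inner (replicate_mset i 0) = {#}" for i
      by (induction i) auto
    ultimately have "inner M' = inner C" "inner M = Q + inner C"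
      unfolding M'_def C filter_union_mset by simp_all
    then show "size (inner M') < size (inner M)"
      using \<open>0 < size Q\<close> by simp
  qed
qed

lemma ex_small_inner:
  assumes "set_mset M \<subseteq> A"
  shows "\<exists>M'. set_mset M' \<subseteq> A \<and> sum_mset M' = sum_mset M \<and> size M' = size M
    \<and> size (inner M') < nat b"
  using assms
proof (induction "size (inner M)" arbitrary: M rule: less_induct)
  case less
  show ?case
  proof (cases "size (inner M) < nat b")
    case True
    with less.prems show ?thesis by auto
  next
    case False
    then have "nat b \<le> size (inner M)"
      by simp
    then obtain M' where M': "set_mset M' \<subseteq> A" "sum_mset M' = sum_mset M" "size M' = size M"
      "size (inner M') < size (inner M)"
      by (rule exchange_inner_submset[OF less.prems])
    from less.hyps[OF M'(4) M'(1)] show ?thesis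
      unfolding M'(2,3) .
  qed
qed

lemma mset_eq_inner_plus_ends:
  assumes "set_mset M \<subseteq> {0..b}"
  shows "M = inner M + replicate_mset (count M b) b + replicate_mset (count M 0) 0"
proof (rule multiset_eqI)
  fix x
  show "count M x = count (inner M + replicate_mset (count M b) b + replicate_mset (count M 0) 0) x"
    using assms b_pos by (cases "x \<in># M") (auto simp: not_in_iff)
qed

lemma coneA_normal_form:
  assumes "(n, k) \<in> coneA A"
  obtains P c where "set_mset P \<subseteq> A \<inter> {0<..<b}" "int (size P) < b"
    "n = sum_mset P + int c * b" "int (size P + c) \<le> k"
proof -
  obtain M where M: "set_mset M \<subseteq> A" "n = sum_mset M" "k = int (size M)"
    using assms finite_A by (auto simp: mem_coneA_iff)
  then obtain M' where M': "set_mset M' \<subseteq> A" "sum_mset M' = n" "size M' = size M"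
    "size (inner M') < nat b"
    using ex_small_inner by metis
  have "M' = inner M' + replicate_mset (count M' b) b + replicate_mset (count M' 0) 0"
    using M'(1) A_subset by (intro mset_eq_inner_plus_ends) blast
  then have "sum_mset M' = sum_mset (inner M') + int (count M' b) * b"
    "size M' = size (inner M') + count M' b + count M' 0"
    by (metis sum_mset.union sum_mset_replicate_mset add.right_neutral mult_zero_right,
        metis size_union size_replicate_mset)
  with M M' show thesis
    by (intro that[of "inner M'" "count M' b"]) auto
qed

lemma mem_coneA_intro:
  assumes "set_mset P \<subseteq> A" "n = sum_mset P + int c * b" "int (size P + c) \<le> k"
  shows "(n, k) \<in> coneA A"
proof -
  define M where "M = P + replicate_mset c b + replicate_mset (nat k - (size P + c)) 0"
  have "set_mset M \<subseteq> A" "n = sum_mset M" "k = int (size M)"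
    using assms zero_in_A b_in_A by (auto simp: M_def)
  then show ?thesis
    using finite_A by (auto simp: mem_coneA_iff)
qed

lemma sum_inner_bound:
  assumes "set_mset P \<subseteq> A \<inter> {0<..<b}" "int (size P) < b"
  shows "0 \<le> sum_mset P" "sum_mset P \<le> (b - 1)^2"
proof -
  have P: "set_mset P \<subseteq> {0..b - 1}"
    using assms(1) by force
  show "0 \<le> sum_mset P"
    using sum_mset_bounds(1)[OF P] by simp
  have "sum_mset P \<le> int (size P) * (b - 1)"
    using sum_mset_bounds(2)[OF P] by simp
  also have "\<dots> \<le> (b - 1) * (b - 1)"
    using assms(2) b_pos by (simp add: mult_right_mono)
  finally show "sum_mset P \<le> (b - 1)^2"
    by (simp add: power2_eq_square)
qed

lemma bound_if_shift_mem_coneA: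
  assumes "(n + int m * b, k + int m) \<in> coneA A" "(n, k) \<notin> coneA A"
  shows "n + b \<le> (b - 1)^2"
proof -
  obtain P c where P: "set_mset P \<subseteq> A \<inter> {0<..<b}" "int (size P) < b"
    and n: "n + int m * b = sum_mset P + int c * b" and k: "int (size P + c) \<le> k + int m"
    using coneA_normal_form[OF assms(1)] by blast
  \<comment> \<open>With m copies of b available, removing them would represent (n, k).\<close>
  have "c < m"
  proof (rule ccontr)
    assume "\<not> c < m"
    then have "(n, k) \<in> coneA A"
      using P n k by (intro mem_coneA_intro[of P n "c - m"]) (auto simp: of_nat_diff algebra_simps)
    with assms(2) show False ..
  qed
  then have "int c * b \<le> (int m - 1) * b"
    using b_pos by (intro mult_right_mono) auto
  with n sum_inner_bound[OF P] show ?thesis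
    by (simp add: algebra_simps)
qed

lemma mem_coneA_if_bound:
  assumes "(n, k') \<in> coneA A" "n + b \<le> (b - 1)^2" "2 * b - 4 \<le> k"
  shows "(n, k) \<in> coneA A"
proof -
  obtain P c where P: "set_mset P \<subseteq> A \<inter> {0<..<b}" "int (size P) < b"
    and n: "n = sum_mset P + int c * b"
    using coneA_normal_form[OF assms(1)] by blast
  have "0 \<le> n"
    using n sum_inner_bound(1)[OF P] b_pos by simp
  have "1 < b"
  proof (rule ccontr)
    assume "\<not> 1 < b"
    with b_pos have "b = 1"
      by simp
    with assms(2) \<open>0 \<le> n\<close> show False
      by simp
  qed
  then have "int c * b < (b - 2) * b"
    using n assms(2) sum_inner_bound(1)[OF P] by (simp add: power2_eq_square algebra_simps)
  then have "int c \<le> b - 3"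
    using b_pos by simp
  then have "int (size P + c) \<le> k"
    using P(2) assms(3) by simp
  with P n show ?thesis
    by (intro mem_coneA_intro[of P n c]) auto
qed

end

lemma mem_lat_iff: "(x, y) \<in> lat b \<longleftrightarrow> b dvd x"
proof
  assume "b dvd x"
  then obtain t where "x = b * t"
    by blast
  then show "(x, y) \<in> lat b"
    unfolding lat_def by (intro CollectI exI[of _ "y - t"] exI[of _ t]) simp
qed (auto simp: lat_def)

lemma mem_S_set_iff: "p \<in> S_set A b a \<longleftrightarrow> p \<in> coneA A \<and> b dvd fst p - a"
  by (simp add: S_set_def mem_lat_iff)

lemma mem_shifted_lat_pos_iff:
  "p \<in> shifted_lat_pos b q \<longleftrightarrow> (\<exists>i m. p = (fst q + b * int i, snd q + int m + int i))"
  unfolding shifted_lat_pos_def lat_pos_def by force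

lemma shifted_lat_pos_add:
  assumes "(x, y) \<in> shifted_lat_pos b q"
  shows "(x + b * int i, y + int m + int i) \<in> shifted_lat_pos b q"
proof -
  obtain i' m' where "x = fst q + b * int i'" "y = snd q + int m' + int i'"
    using assms by (auto simp: mem_shifted_lat_pos_iff)
  then have "(x + b * int i, y + int m + int i)
      = (fst q + b * int (i' + i), snd q + int (m' + m) + int (i' + i))"
    by (simp add: algebra_simps)
  then show ?thesis
    by (auto simp: mem_shifted_lat_pos_iff simp del: of_nat_add)
qed

lemma ex_notin_finite_inj:
  fixes f :: "nat \<Rightarrow> 'a"
  assumes "inj f" "finite E"
  shows "\<exists>i. f i \<notin> E"
proof (rule ccontr)
  assume "\<nexists>i. f i \<notin> E"
  then have "range f \<subseteq> E"
    by blast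
  then have "finite (range f)"
    using assms(2) by (rule finite_subset)
  with assms(1) have "finite (UNIV :: nat set)"
    using finite_imageD by blast
  then show False
    by simp
qed

theorem corollary5p3:
  fixes A :: "int set" and b a g h :: int
  assumes "finite A" and "A \<noteq> {}"
    and "Min A = 0" and "Max A = b" and "Gcd A = 1"
    and "0 \<le> a" and "a < b"
    and "0 \<le> g" and "0 \<le> h"
    and "S_set A b a \<subseteq> shifted_lat_pos b (g, h)"
    and "finite (shifted_lat_pos b (g, h) - S_set A b a)"
  shows "\<forall>(n, k) \<in> shifted_lat_pos b (g, h) - S_set A b a. k \<le> 2 * b - 5"
proof (intro ballI, clarify)
  let ?E = "shifted_lat_pos b (g, h) - S_set A b a"
  interpret interval_generators A b
  proof
    show "finite A" "0 < b"
      using assms(1,6,7) by simp_all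
    show "0 \<in> A" "b \<in> A"
      using Min_in Max_in assms(1-4) by metis+
    show "A \<subseteq> {0..b}"
      using Min_le Max_ge assms(1,3,4) by fastforce
  qed
  fix n k
  assume E: "(n, k) \<in> shifted_lat_pos b (g, h)" "(n, k) \<notin> S_set A b a"
  show "k \<le> 2 * b - 5"
  proof (rule ccontr)
    assume "\<not> k \<le> 2 * b - 5"
    \<comment> \<open>Both rays from (n, k) stay in the shifted lattice, so by finiteness of E they meet S_a.\<close>
    obtain j where up: "(n, k + int j) \<in> S_set A b a"
      using ex_notin_finite_inj[of "\<lambda>j. (n, k + int j)" ?E] shifted_lat_pos_add[OF E(1), of 0]
        assms(11) by (auto simp: inj_def)
    obtain m where diag: "(n + int m * b, k + int m) \<in> S_set A b a"
      using ex_notin_finite_inj[of "\<lambda>m. (n + int m * b, k + int m)" ?E]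
        shifted_lat_pos_add[OF E(1), of _ 0] assms(11) by (auto simp: inj_def mult.commute)
    have "(n, k) \<notin> coneA A"
      using E(2) up by (simp add: mem_S_set_iff)
    moreover have "n + b \<le> (b - 1)^2"
      using diag \<open>(n, k) \<notin> coneA A\<close>
      by (intro bound_if_shift_mem_coneA[of n m k]) (simp add: mem_S_set_iff)
    ultimately show False
      using mem_coneA_if_bound[of n "k + int j" k] up \<open>\<not> k \<le> 2 * b - 5\<close>
      by (simp add: mem_S_set_iff)
  qed
qed

end
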